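(* Let $r\ge 3$ be an integer, let $\varphi$ be an instance of Exact $r$-SAT, and let $G(\varphi)$ be the graph constructed from $\varphi$ as described in the context. If $\mathrm{wcol}_r(G(\varphi)) \leq 2r-1$, then $\varphi$ has a satisfying assignment.
   Context: Exact $r$-SAT: given a CNF formula $\varphi$ with clauses $c_1,\dots,c_m$ over variables $x_1,\dots,x_n$ such that each clause contains exactly $r$ different variables, decide whether $\varphi$ is satisfiable. An $\ell$-subdivided edge between $a$ and $b$ is an induced path with $\ell$ internal vertices (subdivision vertices) joining $a$ and $b$, whose internal vertices have no other neighbors. Construction of $G(\varphi)$: for each clause $c_i$ create $2r$ vertices $u_i^1,\dots,u_i^{2r}$. For each variable $x_j$ create two vertices $v_j,v'_j$ (for the literals $x_j$ and $\overline{x}_j$) joined by an edge. For each clause $c_i$ containing literal $x_j$, add two $(r-2)$-subdivided edges from $v_j$ to each of $u_i^1,\dots,u_i^{2r}$; for each clause $c_i$ containing $\overline{x}_j$, add two $(r-2)$-subdivided edges from $v'_j$ to each of $u_i^1,\dots,u_i^{2r}$. Weak coloring numbers: for a graph $G=(V,E)$ and a total order $\sigma$ of $V$, a vertex $v\neq u$ is weakly $r$-reachable from $u$ if $u <_\sigma v$ and there is a $u$–$v$ path $P$ of length at most $r$ all of whose vertices other than $u,v$ precede $v$ in $\sigma$; $\mathrm{wreach}_r(u,G_\sigma)$ is the set of such $v$, and $\mathrm{wcol}_r(G)=\min_\sigma\max_u|\mathrm{wreach}_r(u,G_\sigma)|$ over all total orders $\sigma$ of $V$. *)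

theory Defs
  imports Main
begin

text \<open>A literal is a pair (j, b): (j, True) is x_j, (j, False) is the negation of x_j.
  Variables are 0..n-1. A formula is a list of clauses, each a set of literals.\<close>

type_synonym literal = "nat \<times> bool"
type_synonym clause = "literal set"

definition exact_r_cnf :: "nat \<Rightarrow> nat \<Rightarrow> clause list \<Rightarrow> bool" where
  "exact_r_cnf r n cs \<longleftrightarrow>
     (\<forall>c \<in> set cs. finite c \<and> card c = r \<and> card (fst ` c) = r \<and> fst ` c \<subseteq> {..<n})"

definition satisfiable :: "clause list \<Rightarrow> bool" where
  "satisfiable cs \<longleftrightarrow> (\<exists>a :: nat \<Rightarrow> bool. \<forall>c \<in> set cs. \<exists>(j, b) \<in> c. a j = b)"

text \<open>A simple graph is given by a vertex set V and a symmetric adjacency predicate E.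
  A total order is a strict linear order R on V (R \<subseteq> V \<times> V).\<close>

definition is_path :: "('a \<Rightarrow> 'a \<Rightarrow> bool) \<Rightarrow> 'a list \<Rightarrow> bool" where
  "is_path E ps \<longleftrightarrow> ps \<noteq> [] \<and> distinct ps \<and> (\<forall>i < length ps - 1. E (ps ! i) (ps ! Suc i))"

definition wreach :: "'a set \<Rightarrow> ('a \<Rightarrow> 'a \<Rightarrow> bool) \<Rightarrow> ('a \<times> 'a) set \<Rightarrow> nat \<Rightarrow> 'a \<Rightarrow> 'a set" where
  "wreach V E R r u = {v \<in> V. v \<noteq> u \<and> (u, v) \<in> R \<and>
      (\<exists>ps. is_path E ps \<and> set ps \<subseteq> V \<and> hd ps = u \<and> last ps = v \<and> length ps \<le> r + 1 \<and>
            (\<forall>w \<in> set ps. w \<noteq> u \<and> w \<noteq> v \<longrightarrow> (w, v) \<in> R))}"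

definition total_orders_on :: "'a set \<Rightarrow> ('a \<times> 'a) set set" where
  "total_orders_on V = {R. R \<subseteq> V \<times> V \<and> strict_linear_order_on V R}"

definition wcol :: "'a set \<Rightarrow> ('a \<Rightarrow> 'a \<Rightarrow> bool) \<Rightarrow> nat \<Rightarrow> nat" where
  "wcol V E r = Min ((\<lambda>R. Max (insert 0 ((\<lambda>u. card (wreach V E R r u)) ` V))) ` total_orders_on V)"

text \<open>U i k = u_i^k (clause i, 1 \<le> k \<le> 2r); Lit j True = v_j, Lit j False = v'_j;
  Sub i j b k c p = p-th subdivision vertex (1 \<le> p \<le> r-2) of copy c (c < 2) of the
  subdivided edge between the vertex of literal (j,b) and u_i^k.\<close>

datatype vtx = U nat nat | Lit nat bool | Sub nat nat bool nat nat nat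

definition sv :: "nat \<Rightarrow> nat \<Rightarrow> nat \<Rightarrow> bool \<Rightarrow> nat \<Rightarrow> nat \<Rightarrow> nat \<Rightarrow> vtx" where
  "sv r i j b k c p = (if p = 0 then Lit j b else if p = r - 1 then U i k else Sub i j b k c p)"

definition G_verts :: "nat \<Rightarrow> nat \<Rightarrow> clause list \<Rightarrow> vtx set" where
  "G_verts r n cs =
     {U i k | i k. i < length cs \<and> 1 \<le> k \<and> k \<le> 2 * r}
   \<union> {Lit j b | j b. j < n}
   \<union> {Sub i j b k c p | i j b k c p. i < length cs \<and> (j, b) \<in> cs ! i \<and> 1 \<le> k \<and> k \<le> 2 * r
                                  \<and> c < 2 \<and> 1 \<le> p \<and> p \<le> r - 2}"

definition G_edges :: "nat \<Rightarrow> nat \<Rightarrow> clause list \<Rightarrow> (vtx \<times> vtx) set" where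
  "G_edges r n cs =
     {(Lit j True, Lit j False) | j. j < n}
   \<union> {(sv r i j b k c p, sv r i j b k c (Suc p)) | i j b k c p.
        i < length cs \<and> (j, b) \<in> cs ! i \<and> 1 \<le> k \<and> k \<le> 2 * r \<and> c < 2 \<and> p < r - 1}"

definition G_adj :: "nat \<Rightarrow> nat \<Rightarrow> clause list \<Rightarrow> vtx \<Rightarrow> vtx \<Rightarrow> bool" where
  "G_adj r n cs x y \<longleftrightarrow> (x, y) \<in> G_edges r n cs \<or> (y, x) \<in> G_edges r n cs"

end

(* Fix an order R attaining wcol_r and let a literal be true iff its vertex comes after the
   vertex of its negation. If a clause C_i were falsified, let m be the R-least vertex among
   u_i^1, ..., u_i^2r and the r literal vertices of C_i. Along a subdivided edge leaving m
   (at most r edges long), the R-greatest vertex after m is weakly r-reachable from m.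
   If m is a literal vertex, the 2r subdivided edges to u_i^1, ..., u_i^2r give 2r distinct
   such vertices. If m = u_i^k, each literal of C_i gives two: the greatest vertices of its
   two parallel subdivided edges, or, when both are the literal vertex itself, that vertex
   together with its negation, which comes later and is one more edge away. Either way
   wreach_r(m) has at least 2r elements. *)

theory Submission
  imports Defs
begin

section \<open>Paths and weak reachability\<close>

lemma is_path_take:
  assumes "is_path E ps" "0 < m"
  shows "is_path E (take m ps)"
  using assms unfolding is_path_def by (auto simp: distinct_take)

lemma is_path_rev:
  assumes "is_path E ps" "\<And>x y. E x y \<Longrightarrow> E y x"
  shows "is_path E (rev ps)"
  unfolding is_path_def
proof (intro conjI allI impI)
  show "rev ps \<noteq> []" "distinct (rev ps)" using assms(1) by (auto simp: is_path_def)
  fix q assume q: "q < length (rev ps) - 1"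
  let ?L = "length ps"
  have "E (ps ! (?L - Suc (Suc q))) (ps ! Suc (?L - Suc (Suc q)))"
    using assms(1) q unfolding is_path_def by auto
  moreover have "Suc (?L - Suc (Suc q)) = ?L - Suc q" using q by simp
  ultimately show "E (rev ps ! q) (rev ps ! Suc q)" using q assms(2) by (simp add: rev_nth)
qed

lemma is_path_snoc:
  assumes "is_path E ps" "x \<notin> set ps" "E (last ps) x"
  shows "is_path E (ps @ [x])"
  unfolding is_path_def
proof (intro conjI allI impI)
  show "ps @ [x] \<noteq> []" by simp
  show "distinct (ps @ [x])" using assms by (auto simp: is_path_def)
  fix q assume q: "q < length (ps @ [x]) - 1"
  show "E ((ps @ [x]) ! q) ((ps @ [x]) ! Suc q)"
  proof (cases "Suc q < length ps")
    case True
    then show ?thesis using assms(1) by (auto simp: is_path_def nth_append)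
  next
    case False
    then have "q = length ps - 1" using q by simp
    moreover have "ps \<noteq> []" using assms(1) by (simp add: is_path_def)
    ultimately show ?thesis using assms(3) by (simp add: nth_append last_conv_nth)
  qed
qed

lemma finite_total_on_obtain_greatest:
  assumes "finite S" "S \<noteq> {}" "S \<subseteq> V" "trans R" "total_on V R"
  obtains v where "v \<in> S" "\<forall>x\<in>S. x \<noteq> v \<longrightarrow> (x, v) \<in> R"
  using assms(1-3)
proof (induction S arbitrary: thesis rule: finite_ne_induct)
  case (singleton x)
  then show ?case by simp
next
  case (insert x F)
  then obtain v where v: "v \<in> F" "\<forall>y\<in>F. y \<noteq> v \<longrightarrow> (y, v) \<in> R" by auto
  show ?case
  proof (cases "(v, x) \<in> R")
    case True
    have "(y, x) \<in> R" if "y \<in> F" for y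
      using True v that assms(4) by (cases "y = v") (auto dest: transD)
    then show ?thesis using insert.prems(1) by auto
  next
    case False
    moreover have "x \<noteq> v" "x \<in> V" "v \<in> V" using insert v by auto
    ultimately have "(x, v) \<in> R" using assms(5) unfolding total_on_def by blast
    then show ?thesis using insert.prems(1) v by auto
  qed
qed

lemma wreach_if_greatest_on_path:
  assumes R: "strict_linear_order_on V R"
    and path: "is_path E (u # ps)" "set (u # ps) \<subseteq> V" "length ps \<le> r"
    and v: "v \<in> set ps" "\<forall>x\<in>set ps. x \<noteq> v \<longrightarrow> (x, v) \<in> R" "(u, v) \<in> R"
  shows "v \<in> wreach V E R r u"
proof -
  obtain idx where idx: "idx < length ps" "ps ! idx = v" using v(1) by (auto simp: in_set_conv_nth)
  define qs where "qs = u # take idx ps @ [v]"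
  have qs_take: "qs = take (idx + 2) (u # ps)"
    using idx by (simp add: qs_def take_Suc_conv_app_nth)
  have "is_path E qs" unfolding qs_take by (rule is_path_take[OF path(1)]) simp
  moreover have "set qs \<subseteq> V" using path(2) set_take_subset unfolding qs_take by fastforce
  moreover have "length qs \<le> r + 1" using idx path(3) by (simp add: qs_def)
  moreover have "\<forall>w\<in>set qs. w \<noteq> u \<and> w \<noteq> v \<longrightarrow> (w, v) \<in> R"
    using v(2) by (auto simp: qs_def dest: in_set_takeD)
  moreover have "u \<noteq> v" using v(3) R by (auto simp: strict_linear_order_on_def irrefl_def)
  ultimately show ?thesis
    using v(1,3) path(2) unfolding wreach_def by (auto intro!: exI[of _ qs] simp: qs_def)
qed

lemma greatest_on_path_in_wreach:
  assumes R: "strict_linear_order_on V R"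
    and path: "is_path E (u # ps)" "set (u # ps) \<subseteq> V" "length ps \<le> r"
    and w: "w \<in> set ps" "(u, w) \<in> R"
  obtains v where "v \<in> set ps" "\<forall>x\<in>set ps. x \<noteq> v \<longrightarrow> (x, v) \<in> R" "v \<in> wreach V E R r u"
proof -
  have trans: "trans R" and total: "total_on V R"
    using R by (auto simp: strict_linear_order_on_def)
  obtain v where v: "v \<in> set ps" "\<forall>x\<in>set ps. x \<noteq> v \<longrightarrow> (x, v) \<in> R"
    using finite_total_on_obtain_greatest[OF _ _ _ trans total, of "set ps"] w(1) path(2)
    by (metis empty_iff finite_set insert_subset list.simps(15))
  have "(u, v) \<in> R" using v w trans by (cases "w = v") (auto dest: transD)
  then show thesis using that v wreach_if_greatest_on_path[OF R path v] by blast
qed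

lemma total_orders_on_nonempty: "total_orders_on V \<noteq> {}"
proof -
  obtain w where "well_order_on V w" using well_order_on by blast
  then have "linear_order_on V w" "w \<subseteq> V \<times> V"
    by (auto simp: well_order_on_def linear_order_on_def partial_order_on_def preorder_on_def)
  then have "w - Id \<in> total_orders_on V"
    by (auto simp: total_orders_on_def intro: strict_linear_order_on_diff_Id)
  then show ?thesis by blast
qed

lemma wcol_le_obtain_order:
  assumes "finite V" "wcol V E r \<le> K"
  obtains R where "R \<in> total_orders_on V" "\<And>u. u \<in> V \<Longrightarrow> card (wreach V E R r u) \<le> K"
proof -
  define width where "width R = Max (insert 0 ((\<lambda>u. card (wreach V E R r u)) ` V))" for R
  have "finite (total_orders_on V)"
    by (rule finite_subset[of _ "Pow (V \<times> V)"]) (auto simp: total_orders_on_def assms(1))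
  then have "wcol V E r \<in> width ` total_orders_on V"
    unfolding wcol_def width_def[symmetric] using total_orders_on_nonempty by (intro Min_in) auto
  then obtain R where R: "R \<in> total_orders_on V" "width R = wcol V E r" by auto
  have "card (wreach V E R r u) \<le> K" if "u \<in> V" for u
  proof -
    have "card (wreach V E R r u) \<le> width R"
      unfolding width_def by (rule Max_ge) (use assms(1) that in auto)
    then show ?thesis using R(2) assms(2) by simp
  qed
  then show thesis using that R(1) by blast
qed

lemma card_ge_of_labelled_subsets:
  assumes "finite W" "finite I" "inj_on h I"
    and "\<And>x. x \<in> I \<Longrightarrow> T x \<subseteq> W" "\<And>x. x \<in> I \<Longrightarrow> card (T x) = c"
    and "\<And>x y. x \<in> I \<Longrightarrow> y \<in> T x \<Longrightarrow> lbl y = h x"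
  shows "card I * c \<le> card W"
proof -
  have "card I * c = (\<Sum>x\<in>I. card (T x))" using assms(5) by simp
  also have "\<dots> = card (\<Union>x\<in>I. T x)"
  proof (rule card_UN_disjoint[symmetric])
    show "\<forall>x\<in>I. finite (T x)" using assms(1,4) finite_subset by blast
    show "\<forall>x\<in>I. \<forall>x'\<in>I. x \<noteq> x' \<longrightarrow> T x \<inter> T x' = {}"
      using assms(3,6) by (metis disjoint_iff inj_onD)
  qed (use assms(2) in simp)
  also have "\<dots> \<le> card W" using assms(1,4) by (intro card_mono) auto
  finally show ?thesis .
qed

section \<open>The graph G(phi)\<close>

lemma exact_r_cnf_var_less:
  assumes "exact_r_cnf r n cs" "i < length cs" "(j, b) \<in> cs ! i"
  shows "j < n"
  using assms nth_mem unfolding exact_r_cnf_def by fastforce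

lemma finite_G_verts:
  assumes "exact_r_cnf r n cs"
  shows "finite (G_verts r n cs)"
proof -
  have "{U i k | i k. i < length cs \<and> 1 \<le> k \<and> k \<le> 2 * r} \<subseteq> case_prod U ` ({..<length cs} \<times> {..2 * r})"
    by auto
  moreover have "{Lit j b | j b. j < n} \<subseteq> case_prod Lit ` ({..<n} \<times> UNIV)"
    by auto
  moreover have "{Sub i j b k c p | i j b k c p. i < length cs \<and> (j, b) \<in> cs ! i \<and> 1 \<le> k \<and> k \<le> 2 * r
                                  \<and> c < 2 \<and> 1 \<le> p \<and> p \<le> r - 2}
      \<subseteq> (\<lambda>(i, j, b, k, c, p). Sub i j b k c p) `
          ({..<length cs} \<times> {..<n} \<times> UNIV \<times> {..2 * r} \<times> {..<2} \<times> {..r})"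
  proof (intro subsetI, elim CollectE exE conjE)
    fix x i j b k c p
    assume "x = Sub i j b k c p" "i < length cs" "(j, b) \<in> cs ! i" "k \<le> 2 * r" "c < 2" "p \<le> r - 2"
    then show "x \<in> (\<lambda>(i, j, b, k, c, p). Sub i j b k c p) `
          ({..<length cs} \<times> {..<n} \<times> UNIV \<times> {..2 * r} \<times> {..<2} \<times> {..r})"
      using exact_r_cnf_var_less[OF assms] by (intro image_eqI[where x = "(i, j, b, k, c, p)"]) auto
  qed
  ultimately show ?thesis unfolding G_verts_def by (simp add: finite_subset)
qed

definition subdivided_edge :: "nat \<Rightarrow> nat \<Rightarrow> nat \<Rightarrow> bool \<Rightarrow> nat \<Rightarrow> nat \<Rightarrow> vtx list" where
  "subdivided_edge r i j b k c = map (sv r i j b k c) [0..<r]"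

lemma subdivided_edge_eq:
  assumes "2 \<le> r"
  shows "subdivided_edge r i j b k c = Lit j b # map (Sub i j b k c) [1..<r - 1] @ [U i k]"
proof -
  have "[0..<r] = 0 # [1..<r - 1] @ [r - 1]"
    using assms by (cases r) (auto simp: upt_conv_Cons)
  moreover have "map (sv r i j b k c) [1..<r - 1] = map (Sub i j b k c) [1..<r - 1]"
    by (auto simp: sv_def)
  ultimately show ?thesis using assms by (simp add: subdivided_edge_def sv_def)
qed

lemma subdivided_edge_is_path:
  assumes "2 \<le> r" "i < length cs" "(j, b) \<in> cs ! i" "k \<in> {1..2 * r}" "c < 2"
  shows "is_path (G_adj r n cs) (subdivided_edge r i j b k c)"
  unfolding is_path_def
proof (intro conjI allI impI)
  show "subdivided_edge r i j b k c \<noteq> []" "distinct (subdivided_edge r i j b k c)"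
    using assms(1) by (auto simp: subdivided_edge_eq distinct_map inj_on_def)
  fix q assume "q < length (subdivided_edge r i j b k c) - 1"
  then have q: "q < r - 1" by (simp add: subdivided_edge_def)
  have "(sv r i j b k c q, sv r i j b k c (Suc q)) \<in> G_edges r n cs"
    unfolding G_edges_def using assms q by auto
  then show "G_adj r n cs (subdivided_edge r i j b k c ! q) (subdivided_edge r i j b k c ! Suc q)"
    using q by (simp add: subdivided_edge_def G_adj_def del: upt_Suc)
qed

lemma set_subdivided_edge_subset:
  assumes "2 \<le> r" "exact_r_cnf r n cs" "i < length cs" "(j, b) \<in> cs ! i" "k \<in> {1..2 * r}" "c < 2"
  shows "set (subdivided_edge r i j b k c) \<subseteq> G_verts r n cs"
  using assms(1,3-6) exact_r_cnf_var_less[OF assms(2-4)]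
  unfolding subdivided_edge_eq[OF assms(1)] G_verts_def by auto

fun vtx_slot :: "vtx \<Rightarrow> nat" where
  "vtx_slot (U i k) = k"
| "vtx_slot (Lit j b) = 0"
| "vtx_slot (Sub i j b k c p) = k"

fun vtx_var :: "vtx \<Rightarrow> nat" where
  "vtx_var (U i k) = 0"
| "vtx_var (Lit j b) = j"
| "vtx_var (Sub i j b k c p) = j"

locale ordered_formula_graph =
  fixes r n :: nat and cs :: "clause list" and R :: "vtx rel"
  assumes r_ge_3: "3 \<le> r"
    and exact: "exact_r_cnf r n cs"
    and order: "R \<in> total_orders_on (G_verts r n cs)"
begin

abbreviation V :: "vtx set" where "V \<equiv> G_verts r n cs"
abbreviation E :: "vtx \<Rightarrow> vtx \<Rightarrow> bool" where "E \<equiv> G_adj r n cs"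

lemma strict_linear_order: "strict_linear_order_on V R"
  using order by (simp add: total_orders_on_def)

lemma finite_wreach: "finite (wreach V E R r u)"
  using finite_G_verts[OF exact] by (rule finite_subset[rotated]) (auto simp: wreach_def)

lemma subdivided_edge_in_graph:
  assumes "i < length cs" "(j, b) \<in> cs ! i" "k \<in> {1..2 * r}" "c < 2"
  shows "is_path E (subdivided_edge r i j b k c)" "set (subdivided_edge r i j b k c) \<subseteq> V"
  using r_ge_3 subdivided_edge_is_path[OF _ assms] set_subdivided_edge_subset[OF _ exact assms]
  by auto

lemma card_wreach_literal_first:
  assumes "i < length cs" "(j, b) \<in> cs ! i"
    and first: "\<And>k. k \<in> {1..2 * r} \<Longrightarrow> (Lit j b, U i k) \<in> R"
  shows "2 * r \<le> card (wreach V E R r (Lit j b))"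
proof -
  have "\<exists>v \<in> wreach V E R r (Lit j b). vtx_slot v = k" if k: "k \<in> {1..2 * r}" for k
  proof -
    define ps where "ps = map (Sub i j b k 0) [1..<r - 1] @ [U i k]"
    have "subdivided_edge r i j b k 0 = Lit j b # ps"
      using r_ge_3 by (simp add: subdivided_edge_eq ps_def)
    then have "is_path E (Lit j b # ps)" "set (Lit j b # ps) \<subseteq> V"
      using subdivided_edge_in_graph[OF assms(1,2) k, of 0] by auto
    moreover have "length ps \<le> r" using r_ge_3 by (simp add: ps_def)
    moreover have "U i k \<in> set ps" by (simp add: ps_def)
    ultimately obtain v where "v \<in> set ps" "v \<in> wreach V E R r (Lit j b)"
      using greatest_on_path_in_wreach[OF strict_linear_order _ _ _ _ first[OF k]] by metis
    moreover have "vtx_slot v = k" using \<open>v \<in> set ps\<close> by (auto simp: ps_def)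
    ultimately show ?thesis by blast
  qed
  then obtain g where g: "\<And>k. k \<in> {1..2 * r} \<Longrightarrow> g k \<in> wreach V E R r (Lit j b) \<and> vtx_slot (g k) = k"
    by metis
  have "inj_on g {1..2 * r}" by (metis g inj_onI)
  then have "card {1..2 * r} \<le> card (wreach V E R r (Lit j b))"
    by (rule card_inj_on_le) (use g finite_wreach in auto)
  then show ?thesis by simp
qed

lemma two_wreach_of_variable:
  assumes "i < length cs" "k \<in> {1..2 * r}" "(j, b) \<in> cs ! i"
    and falsified: "(Lit j b, Lit j (\<not> b)) \<in> R"
    and first: "(U i k, Lit j b) \<in> R"
  obtains x y where "x \<noteq> y" "x \<in> wreach V E R r (U i k)" "y \<in> wreach V E R r (U i k)"
    "vtx_var x = j" "vtx_var y = j"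
proof -
  define ps where "ps c = rev (map (Sub i j b k c) [1..<r - 1]) @ [Lit j b]" for c
  have rev_edge: "rev (subdivided_edge r i j b k c) = U i k # ps c" for c
    using r_ge_3 by (simp add: subdivided_edge_eq ps_def)
  have path: "is_path E (U i k # ps c)" "set (U i k # ps c) \<subseteq> V" if "c < 2" for c
  proof -
    have "is_path E (rev (subdivided_edge r i j b k c))"
      using subdivided_edge_in_graph(1)[OF assms(1,3,2) that] by (rule is_path_rev) (auto simp: G_adj_def)
    then show "is_path E (U i k # ps c)" by (simp only: rev_edge)
    show "set (U i k # ps c) \<subseteq> V"
      using subdivided_edge_in_graph(2)[OF assms(1,3,2) that] by (simp flip: rev_edge)
  qed
  have len: "length (ps c) \<le> r" for c using r_ge_3 by (simp add: ps_def)
  have lit: "Lit j b \<in> set (ps c)" for c by (simp add: ps_def)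
  obtain x where x: "x \<in> set (ps 0)" "\<forall>z\<in>set (ps 0). z \<noteq> x \<longrightarrow> (z, x) \<in> R"
      "x \<in> wreach V E R r (U i k)"
    using greatest_on_path_in_wreach[OF strict_linear_order path[of 0] len lit first] by auto
  obtain y where y: "y \<in> set (ps 1)" "y \<in> wreach V E R r (U i k)"
    using greatest_on_path_in_wreach[OF strict_linear_order path[of 1] len lit first] by auto
  have var: "vtx_var x = j" "vtx_var y = j" using x(1) y(1) by (auto simp: ps_def)
  show thesis
  proof (cases "x = y")
    case False
    then show thesis using that x(3) y(2) var by blast
  next
    case True
    \<comment> \<open>the two copies only share the literal vertex, which is then extended by its negation\<close>
    then have x_lit: "x = Lit j b" using x(1) y(1) by (auto simp: ps_def)
    let ?w = "Lit j (\<not> b)"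
    have "E (Lit j b) ?w"
      using exact_r_cnf_var_less[OF exact assms(1,3)] by (cases b) (auto simp: G_adj_def G_edges_def)
    then have "is_path E (U i k # ps 0 @ [?w])"
      using is_path_snoc[OF path(1)[of 0], of ?w] by (auto simp: ps_def)
    moreover have "set (U i k # ps 0 @ [?w]) \<subseteq> V"
      using path(2)[of 0] exact_r_cnf_var_less[OF exact assms(1,3)] by (auto simp: G_verts_def)
    moreover have "length (ps 0 @ [?w]) \<le> r" using r_ge_3 by (simp add: ps_def)
    moreover have "\<forall>z\<in>set (ps 0 @ [?w]). z \<noteq> ?w \<longrightarrow> (z, ?w) \<in> R"
      using x(2) x_lit falsified strict_linear_order
      by (auto simp: strict_linear_order_on_def dest: transD)
    moreover have "(U i k, ?w) \<in> R"
      using first falsified strict_linear_order by (auto simp: strict_linear_order_on_def dest: transD)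
    ultimately have "?w \<in> wreach V E R r (U i k)"
      using wreach_if_greatest_on_path[OF strict_linear_order] by simp
    then show thesis using that[of x ?w] x(3) x_lit var by simp
  qed
qed

lemma card_wreach_clause_vertex_first:
  assumes "i < length cs" "k \<in> {1..2 * r}"
    and falsified: "\<And>j b. (j, b) \<in> cs ! i \<Longrightarrow> (Lit j b, Lit j (\<not> b)) \<in> R"
    and first: "\<And>j b. (j, b) \<in> cs ! i \<Longrightarrow> (U i k, Lit j b) \<in> R"
  shows "2 * r \<le> card (wreach V E R r (U i k))"
proof -
  let ?W = "wreach V E R r (U i k)"
  have "\<exists>T. T \<subseteq> ?W \<and> card T = 2 \<and> (\<forall>x\<in>T. vtx_var x = fst l)" if l: "l \<in> cs ! i" for l
  proof -
    obtain j b where jb: "l = (j, b)" by (cases l)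
    obtain x y where "x \<noteq> y" "x \<in> ?W" "y \<in> ?W" "vtx_var x = j" "vtx_var y = j"
      using two_wreach_of_variable[OF assms(1,2)] l falsified first unfolding jb by blast
    then show ?thesis unfolding jb by (intro exI[of _ "{x, y}"]) auto
  qed
  then obtain T where T: "\<And>l. l \<in> cs ! i \<Longrightarrow> T l \<subseteq> ?W \<and> card (T l) = 2 \<and> (\<forall>x\<in>T l. vtx_var x = fst l)"
    by metis
  have clause: "finite (cs ! i)" "card (cs ! i) = r" "card (fst ` cs ! i) = r"
    using exact assms(1) unfolding exact_r_cnf_def by auto
  then have "inj_on fst (cs ! i)" by (simp add: eq_card_imp_inj_on)
  have "card (cs ! i) * 2 \<le> card ?W"
  proof (rule card_ge_of_labelled_subsets[where h = fst and T = T and lbl = vtx_var])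
    show "finite ?W" by (rule finite_wreach)
  qed (use clause(1) \<open>inj_on fst (cs ! i)\<close> T in auto)
  then show ?thesis using clause(2) by simp
qed

lemma falsified_clause_obtain_large_wreach:
  assumes "i < length cs"
    and falsified: "\<And>j b. (j, b) \<in> cs ! i \<Longrightarrow> (Lit j b, Lit j (\<not> b)) \<in> R"
  obtains u where "u \<in> V" "2 * r \<le> card (wreach V E R r u)"
proof -
  define S where "S = U i ` {1..2 * r} \<union> case_prod Lit ` (cs ! i)"
  have "S \<subseteq> V"
    using assms(1) exact_r_cnf_var_less[OF exact assms(1)] by (auto simp: S_def G_verts_def)
  moreover have "finite S" "S \<noteq> {}"
    using exact assms(1) r_ge_3 nth_mem by (auto simp: S_def exact_r_cnf_def)
  ultimately obtain m where m: "m \<in> S" "\<forall>x\<in>S. x \<noteq> m \<longrightarrow> (m, x) \<in> R"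
    using strict_linear_order finite_total_on_obtain_greatest[of S V "R\<inverse>"]
    by (auto simp: strict_linear_order_on_def)
  show thesis
  proof (cases "m \<in> U i ` {1..2 * r}")
    case True
    then obtain k where k: "k \<in> {1..2 * r}" "m = U i k" by blast
    then have "2 * r \<le> card (wreach V E R r m)"
      using card_wreach_clause_vertex_first[OF assms(1) k(1) falsified] m by (auto simp: S_def)
    then show thesis using that m(1) \<open>S \<subseteq> V\<close> by blast
  next
    case False
    then obtain j b where jb: "(j, b) \<in> cs ! i" "m = Lit j b" using m(1) by (auto simp: S_def)
    then have "2 * r \<le> card (wreach V E R r m)"
      using card_wreach_literal_first[OF assms(1) jb(1)] m by (auto simp: S_def)
    then show thesis using that m(1) \<open>S \<subseteq> V\<close> by blast
  qed
qed

lemma unsatisfiable_obtain_falsified_clause: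
  assumes "\<not> satisfiable cs"
  obtains i where "i < length cs" "\<And>j b. (j, b) \<in> cs ! i \<Longrightarrow> (Lit j b, Lit j (\<not> b)) \<in> R"
proof -
  define a where "a j = ((Lit j False, Lit j True) \<in> R)" for j
  obtain c where c: "c \<in> set cs" "\<not> (\<exists>(j, b)\<in>c. a j = b)"
    using assms unfolding satisfiable_def by blast
  then obtain i where i: "i < length cs" "c = cs ! i" by (metis in_set_conv_nth)
  have unsat: "a j \<noteq> b" if "(j, b) \<in> cs ! i" for j b
    using c(2) i(2) that by blast
  have "(Lit j b, Lit j (\<not> b)) \<in> R" if "(j, b) \<in> cs ! i" for j b
  proof (cases b)
    case True
    have "total_on V R" using strict_linear_order by (simp add: strict_linear_order_on_def)
    moreover have "Lit j True \<in> V" "Lit j False \<in> V"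
      using exact_r_cnf_var_less[OF exact i(1) that] by (auto simp: G_verts_def)
    ultimately have "(Lit j True, Lit j False) \<in> R \<or> (Lit j False, Lit j True) \<in> R"
      unfolding total_on_def by simp
    moreover have "(Lit j False, Lit j True) \<notin> R" using unsat[OF that] True by (simp add: a_def)
    ultimately show ?thesis using True by simp
  next
    case False
    then show ?thesis using unsat[OF that] by (simp add: a_def)
  qed
  then show thesis using that i(1) by blast
qed

end

theorem lemma3p9:
  fixes r n :: nat and cs :: "clause list"
  assumes "r \<ge> 3"
    and "exact_r_cnf r n cs"
    and "wcol (G_verts r n cs) (G_adj r n cs) r \<le> 2 * r - 1"
  shows "satisfiable cs"
proof (rule ccontr)
  assume unsat: "\<not> satisfiable cs"
  obtain R where R: "R \<in> total_orders_on (G_verts r n cs)"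
    and bound: "\<And>u. u \<in> G_verts r n cs \<Longrightarrow> card (wreach (G_verts r n cs) (G_adj r n cs) R r u) \<le> 2 * r - 1"
    using wcol_le_obtain_order[OF finite_G_verts[OF assms(2)] assms(3)] by blast
  interpret ordered_formula_graph r n cs R
    using assms(1,2) R by unfold_locales
  obtain i where "i < length cs" "\<And>j b. (j, b) \<in> cs ! i \<Longrightarrow> (Lit j b, Lit j (\<not> b)) \<in> R"
    using unsatisfiable_obtain_falsified_clause[OF unsat] by blast
  then obtain u where "u \<in> V" "2 * r \<le> card (wreach V E R r u)"
    using falsified_clause_obtain_large_wreach by blast
  then show False using bound[of u] assms(1) by simp
qed

end
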